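(* Let $(\mathcal{M},\varphi,\psi)$ be a two-state noncommutative probability space, $n\in\mathbb{N}$ and $\pi\in\mathrm{NC}(n)$. Then for all $a_1,\dots,a_n\in\mathcal{M}$, $$\beta^{\varphi,\psi}_\pi(a_1,\dots,a_n)=\sum_{\rho\in\mathrm{NC}(n),\ \rho\ll\pi}\ \prod_{V\in\mathrm{OB}(\rho)}r_V^{\varphi,\psi}(a_1,\dots,a_n)\prod_{W\in\mathrm{IB}(\rho)}r_W^{\psi}(a_1,\dots,a_n).$$
   Context: A two-state noncommutative probability space is a unital $*$-algebra $\mathcal{M}$ with two states $\varphi,\psi$, $\psi$ tracial. $\mathrm{NC}(n)$: noncrossing partitions of $[n]$; $\mathrm{Int}(n)$: interval partitions. A block $W$ of $\pi$ is nested in a block $V\ne W$ if $\min V\le w\le\max V$ for all $w\in W$; outer blocks are those not nested in any other block, inner blocks are the others; $\mathrm{OB}(\pi)$, $\mathrm{IB}(\pi)$ denote them. For multilinear functionals $(L_n)$ and $V=\{i_1<\dots<i_s\}$, $L_V(a_1,\dots,a_n)=L_s(a_{i_1},\dots,a_{i_s})$. Boolean cumulants $\beta^\theta_n$ of a state $\theta$: $\theta(a_1\cdots a_n)=\sum_{\sigma\in\mathrm{Int}(n)}\prod_{V\in\sigma}\beta^\theta_V(a_1,\dots,a_n)$. Free cumulants $r^\psi$: $\psi(a_1\cdots a_n)=\sum_{\sigma\in\mathrm{NC}(n)}\prod_{V\in\sigma}r^\psi_V$. $c$-free cumulants $r^{\varphi,\psi}$: $\varphi(a_1\cdots a_n)=\sum_{\sigma\in\mathrm{NC}(n)}\prod_{V\in\mathrm{OB}(\sigma)}r^{\varphi,\psi}_V\prod_{W\in\mathrm{IB}(\sigma)}r^\psi_W$.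 The nested two-state Boolean cumulant functional is $\beta^{\varphi,\psi}_\pi(a_1,\dots,a_n):=\prod_{V\in\mathrm{OB}(\pi)}\beta^\varphi_V(a_1,\dots,a_n)\prod_{W\in\mathrm{IB}(\pi)}\beta^\psi_W(a_1,\dots,a_n)$. The irreducible refinement order: for $\rho,\pi\in\mathrm{NC}(n)$, $\rho\ll\pi$ if $\rho\le\pi$ in refinement order (every block of $\rho$ is contained in a block of $\pi$) and for every block $W\in\pi$, $\min W$ and $\max W$ lie in the same block of $\rho$. *)

theory Defs
  imports "HOL-Analysis.Analysis" "HOL-Library.Disjoint_Sets"
begin

text \<open>A unital complex *-algebra: the ring structure comes from the type class ring_1,
  scalar multiplication by complex numbers is smul, and the involution is star.\<close>

definition unital_star_algebra :: "(complex \<Rightarrow> 'a::ring_1 \<Rightarrow> 'a) \<Rightarrow> ('a \<Rightarrow> 'a) \<Rightarrow> bool" where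
  "unital_star_algebra smul star \<longleftrightarrow>
     (\<forall>c x y. smul c (x + y) = smul c x + smul c y) \<and>
     (\<forall>c d x. smul (c + d) x = smul c x + smul d x) \<and>
     (\<forall>c d x. smul c (smul d x) = smul (c * d) x) \<and>
     (\<forall>x. smul 1 x = x) \<and>
     (\<forall>c x y. smul c (x * y) = smul c x * y \<and> smul c (x * y) = x * smul c y) \<and>
     (\<forall>x. star (star x) = x) \<and>
     (\<forall>x y. star (x + y) = star x + star y) \<and>
     (\<forall>c x. star (smul c x) = smul (cnj c) (star x)) \<and>
     (\<forall>x y. star (x * y) = star y * star x)"

definition is_state :: "(complex \<Rightarrow> 'a::ring_1 \<Rightarrow> 'a) \<Rightarrow> ('a \<Rightarrow> 'a) \<Rightarrow> ('a \<Rightarrow> complex) \<Rightarrow> bool" where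
  "is_state smul star \<theta> \<longleftrightarrow>
     (\<forall>x y. \<theta> (x + y) = \<theta> x + \<theta> y) \<and>
     (\<forall>c x. \<theta> (smul c x) = c * \<theta> x) \<and>
     \<theta> 1 = 1 \<and>
     (\<forall>x. Im (\<theta> (star x * x)) = 0 \<and> Re (\<theta> (star x * x)) \<ge> 0)"

definition is_tracial :: "('a::ring_1 \<Rightarrow> complex) \<Rightarrow> bool" where
  "is_tracial \<theta> \<longleftrightarrow> (\<forall>x y. \<theta> (x * y) = \<theta> (y * x))"

definition two_state_ncps ::
  "(complex \<Rightarrow> 'a::ring_1 \<Rightarrow> 'a) \<Rightarrow> ('a \<Rightarrow> 'a) \<Rightarrow> ('a \<Rightarrow> complex) \<Rightarrow> ('a \<Rightarrow> complex) \<Rightarrow> bool" where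
  "two_state_ncps smul star \<phi> \<psi> \<longleftrightarrow>
     unital_star_algebra smul star \<and> is_state smul star \<phi> \<and> is_state smul star \<psi> \<and> is_tracial \<psi>"

section \<open>Partitions of [n] (positions are 0-based: [n] is rendered as {0..<n})\<close>

definition noncrossing :: "nat set set \<Rightarrow> bool" where
  "noncrossing P \<longleftrightarrow> (\<forall>V\<in>P. \<forall>W\<in>P. V \<noteq> W \<longrightarrow>
      \<not> (\<exists>a b c d. a < b \<and> b < c \<and> c < d \<and> a \<in> V \<and> c \<in> V \<and> b \<in> W \<and> d \<in> W))"

definition NC :: "nat \<Rightarrow> nat set set set" where
  "NC n = {P. partition_on {0..<n} P \<and> noncrossing P}"

definition Int_part :: "nat \<Rightarrow> nat set set set" where
  "Int_part n = {P. partition_on {0..<n} P \<and> (\<forall>V\<in>P. \<exists>i j. V = {i..j})}"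

definition nested_in :: "nat set \<Rightarrow> nat set \<Rightarrow> bool" where
  "nested_in W V \<longleftrightarrow> V \<noteq> W \<and> (\<forall>w\<in>W. Min V \<le> w \<and> w \<le> Max V)"

definition OB :: "nat set set \<Rightarrow> nat set set" where
  "OB P = {W\<in>P. \<not> (\<exists>V\<in>P. nested_in W V)}"

definition IB :: "nat set set \<Rightarrow> nat set set" where
  "IB P = {W\<in>P. \<exists>V\<in>P. nested_in W V}"

definition refines :: "nat set set \<Rightarrow> nat set set \<Rightarrow> bool" where
  "refines \<rho> \<pi> \<longleftrightarrow> (\<forall>V\<in>\<rho>. \<exists>W\<in>\<pi>. V \<subseteq> W)"

definition irr_refines :: "nat set set \<Rightarrow> nat set set \<Rightarrow> bool" where
  "irr_refines \<rho> \<pi> \<longleftrightarrow> refines \<rho> \<pi> \<and>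
     (\<forall>W\<in>\<pi>. \<exists>U\<in>\<rho>. Min W \<in> U \<and> Max W \<in> U)"

text \<open>A family of multilinear functionals (L_n) is a function on lists of arguments;
  L_V(a_1,...,a_n) = L_s(a_{i_1},...,a_{i_s}) for V = {i_1 < ... < i_s}.\<close>
definition restr :: "('a list \<Rightarrow> complex) \<Rightarrow> nat set \<Rightarrow> 'a list \<Rightarrow> complex" where
  "restr L V as = L (nths as V)"

definition is_boolean_cumulants :: "('a::ring_1 \<Rightarrow> complex) \<Rightarrow> ('a list \<Rightarrow> complex) \<Rightarrow> bool" where
  "is_boolean_cumulants \<theta> \<beta> \<longleftrightarrow> (\<forall>as. as \<noteq> [] \<longrightarrow>
     \<theta> (prod_list as) = (\<Sum>\<sigma>\<in>Int_part (length as). \<Prod>V\<in>\<sigma>. restr \<beta> V as))"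

definition is_free_cumulants :: "('a::ring_1 \<Rightarrow> complex) \<Rightarrow> ('a list \<Rightarrow> complex) \<Rightarrow> bool" where
  "is_free_cumulants \<psi> r \<longleftrightarrow> (\<forall>as. as \<noteq> [] \<longrightarrow>
     \<psi> (prod_list as) = (\<Sum>\<sigma>\<in>NC (length as). \<Prod>V\<in>\<sigma>. restr r V as))"

definition is_cfree_cumulants ::
  "('a::ring_1 \<Rightarrow> complex) \<Rightarrow> ('a list \<Rightarrow> complex) \<Rightarrow> ('a list \<Rightarrow> complex) \<Rightarrow> bool" where
  "is_cfree_cumulants \<phi> r\<psi> r \<longleftrightarrow> (\<forall>as. as \<noteq> [] \<longrightarrow>
     \<phi> (prod_list as) = (\<Sum>\<sigma>\<in>NC (length as).
        (\<Prod>V\<in>OB \<sigma>. restr r V as) * (\<Prod>W\<in>IB \<sigma>. restr r\<psi> W as)))"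

definition nested_boolean ::
  "('a list \<Rightarrow> complex) \<Rightarrow> ('a list \<Rightarrow> complex) \<Rightarrow> nat set set \<Rightarrow> 'a list \<Rightarrow> complex" where
  "nested_boolean \<beta>\<phi> \<beta>\<psi> \<pi> as = (\<Prod>V\<in>OB \<pi>. restr \<beta>\<phi> V as) * (\<Prod>W\<in>IB \<pi>. restr \<beta>\<psi> W as)"

end

theory Submission
  imports Defs
begin

text \<open>
  Cutting an irreducible refinement \<rho> of \<pi> along the blocks of \<pi> is a bijection onto families of
  irreducible noncrossing partitions of the blocks, and a block of \<rho> is outer exactly when it is
  outer in its piece and the piece sits in an outer block of \<pi>. So the right-hand side factors over
  the blocks of \<pi>. It therefore suffices to show, for \<theta> = \<phi> and for \<theta> = \<psi>, that the Boolean
  cumulant of \<theta> on a block W is the sum of nested_boolean r r\<psi> over the irreducible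
  noncrossing partitions of W, where r are the c-free cumulants of (\<theta>, \<psi>); for \<theta> = \<psi> these are
  the free cumulants r\<psi>.

  Every noncrossing partition of W irreducibly refines exactly one interval partition, the hulls
  of its outer blocks. Regrouping the c-free moment formula accordingly yields a Boolean
  moment formula with these sums in place of the Boolean cumulants, and strong induction on the
  size of W identifies the two. Ranks transport blocks to initial segments, where the
  moment-cumulant relations (stated for whole lists) apply.
\<close>

section \<open>Partitions of sets of positions\<close>

lemma partition_on_block_unique:
  "partition_on A P \<Longrightarrow> V \<in> P \<Longrightarrow> W \<in> P \<Longrightarrow> x \<in> V \<Longrightarrow> x \<in> W \<Longrightarrow> V = W"
  using disjointD[OF partition_onD2] by blast

lemma partition_on_block_subset: "partition_on A P \<Longrightarrow> V \<in> P \<Longrightarrow> V \<subseteq> A"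
  unfolding partition_on_def by blast

lemma partition_on_block_nonempty: "partition_on A P \<Longrightarrow> V \<in> P \<Longrightarrow> V \<noteq> {}"
  unfolding partition_on_def by blast

lemma partition_on_cover: "partition_on A P \<Longrightarrow> x \<in> A \<Longrightarrow> \<exists>V\<in>P. x \<in> V"
  unfolding partition_on_def by blast

lemma partition_on_Pow: "partition_on A P \<Longrightarrow> P \<subseteq> Pow A"
  unfolding partition_on_def by blast

lemma partition_on_Union_subset: "partition_on A P \<Longrightarrow> Q \<subseteq> P \<Longrightarrow> partition_on (\<Union>Q) Q"
  unfolding partition_on_def using pairwise_subset by blast

lemma partition_on_UN:
  assumes \<pi>: "partition_on A \<pi>" and f: "\<And>W. W \<in> \<pi> \<Longrightarrow> partition_on W (f W)"
  shows "partition_on A (\<Union>W\<in>\<pi>. f W)"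
proof (rule partition_onI)
  show "\<Union> (\<Union>W\<in>\<pi>. f W) = A"
    using partition_onD1[OF \<pi>] partition_onD1[OF f] by blast
  show "{} \<notin> (\<Union>W\<in>\<pi>. f W)"
    using partition_onD3[OF f] by blast
  fix p q assume "p \<in> (\<Union>W\<in>\<pi>. f W)" "q \<in> (\<Union>W\<in>\<pi>. f W)" "p \<noteq> q"
  then obtain W1 W2 where W: "W1 \<in> \<pi>" "p \<in> f W1" "W2 \<in> \<pi>" "q \<in> f W2" by blast
  then have "p \<subseteq> W1" "q \<subseteq> W2" using partition_on_block_subset f by blast+
  show "disjnt p q"
  proof (cases "W1 = W2")
    case True
    then show ?thesis using W \<open>p \<noteq> q\<close> disjointD[OF partition_onD2[OF f]] by (auto simp: disjnt_def)
  next
    case False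
    then have "W1 \<inter> W2 = {}" using W disjointD[OF partition_onD2[OF \<pi>]] by blast
    then show ?thesis using \<open>p \<subseteq> W1\<close> \<open>q \<subseteq> W2\<close> by (auto simp: disjnt_def)
  qed
qed

lemma partition_on_subset_eq:
  assumes P: "partition_on A P" and Q: "partition_on A Q" and "P \<subseteq> Q"
  shows "P = Q"
proof
  show "Q \<subseteq> P"
  proof
    fix X assume X: "X \<in> Q"
    then obtain x where x: "x \<in> X" using partition_on_block_nonempty[OF Q] by blast
    then obtain Y where "Y \<in> P" "x \<in> Y"
      using partition_on_cover[OF P] partition_on_block_subset[OF Q X] by blast
    then show "X \<in> P" using partition_on_block_unique[OF Q X _ x] \<open>P \<subseteq> Q\<close> by blast
  qed
qed fact

lemma partition_on_block_Min_Max: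
  fixes A :: "'a::linorder set"
  assumes "finite A" "partition_on A P" "V \<in> P"
  shows "Min V \<in> V" "Max V \<in> V" "\<And>v. v \<in> V \<Longrightarrow> Min V \<le> v" "\<And>v. v \<in> V \<Longrightarrow> v \<le> Max V"
  using finite_subset[OF partition_on_block_subset[OF assms(2,3)] assms(1)]
    partition_on_block_nonempty[OF assms(2,3)] by auto

lemma partition_on_ground_block:
  assumes P: "partition_on A P" and A: "A \<in> P"
  shows "P = {A}"
proof -
  have "X = A" if X: "X \<in> P" for X
  proof -
    obtain x where "x \<in> X" using partition_on_block_nonempty[OF P X] by blast
    then show ?thesis
      using partition_on_block_unique[OF P X A] partition_on_block_subset[OF P X] by blast
  qed
  then show ?thesis using A by blast
qed

lemma nested_in_iff: "nested_in W V \<longleftrightarrow> V \<noteq> W \<and> W \<subseteq> {Min V..Max V}"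
  by (auto simp: nested_in_def)

lemma OB_Un_IB: "OB P \<union> IB P = P"
  and OB_Int_IB: "OB P \<inter> IB P = {}"
  and OB_subset: "OB P \<subseteq> P"
  and IB_subset: "IB P \<subseteq> P"
  by (auto simp: OB_def IB_def)

lemma noncrossingD:
  "noncrossing P \<Longrightarrow> V \<in> P \<Longrightarrow> W \<in> P \<Longrightarrow> V \<noteq> W \<Longrightarrow> a < b \<Longrightarrow> b < c \<Longrightarrow> c < d
    \<Longrightarrow> a \<in> V \<Longrightarrow> c \<in> V \<Longrightarrow> b \<in> W \<Longrightarrow> d \<in> W \<Longrightarrow> False"
  unfolding noncrossing_def by blast

lemma noncrossing_subset: "noncrossing P \<Longrightarrow> Q \<subseteq> P \<Longrightarrow> noncrossing Q"
  unfolding noncrossing_def by blast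

lemma noncrossing_nested_inI:
  assumes A: "finite A" "partition_on A P" and nc: "noncrossing P"
    and V: "V \<in> P" and W: "W \<in> P" "V \<noteq> W"
    and w: "w \<in> W" "Min V \<le> w" "w \<le> Max V"
  shows "nested_in W V"
proof -
  note mm = partition_on_block_Min_Max[OF A V]
  have "w \<noteq> Min V" "w \<noteq> Max V"
    using partition_on_block_unique[OF A(2) V W(1)] mm w W(2) by auto
  then have strict: "Min V < w" "w < Max V" using w by auto
  have "Min V \<le> w'" "w' \<le> Max V" if "w' \<in> W" for w'
    using noncrossingD[OF nc W(1) V W(2)[symmetric], of w' "Min V" w "Max V"]
      noncrossingD[OF nc V W, of "Min V" w "Max V" w'] strict mm that w by force+
  then show ?thesis using W(2) by (auto simp: nested_in_def)
qed

section \<open>Gluing irreducible pieces along a noncrossing partition\<close>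

definition NC_on :: "nat set \<Rightarrow> nat set set set" where
  "NC_on A = {P. partition_on A P \<and> noncrossing P}"

definition irreducible_NC :: "nat set \<Rightarrow> nat set set set" where
  "irreducible_NC A = {P \<in> NC_on A. \<exists>U\<in>P. Min A \<in> U \<and> Max A \<in> U}"

lemma NC_eq_NC_on: "NC n = NC_on {0..<n}"
  by (simp add: NC_def NC_on_def)

lemma finite_NC_on: "finite A \<Longrightarrow> finite (NC_on A)"
  by (rule finite_subset[OF _ finitely_many_partition_on]) (auto simp: NC_on_def)

lemma finite_irreducible_NC: "finite A \<Longrightarrow> finite (irreducible_NC A)"
  by (rule finite_subset[OF _ finite_NC_on]) (auto simp: irreducible_NC_def)

lemma NC_on_subset: "P \<in> NC_on A \<Longrightarrow> Q \<subseteq> P \<Longrightarrow> Q \<in> NC_on (\<Union>Q)"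
  unfolding NC_on_def using partition_on_Union_subset noncrossing_subset by blast

lemma NC_on_UN:
  assumes \<pi>: "\<pi> \<in> NC_on A" and f: "\<And>W. W \<in> \<pi> \<Longrightarrow> f W \<in> NC_on W"
  shows "(\<Union>W\<in>\<pi>. f W) \<in> NC_on A"
proof -
  have \<pi>p: "partition_on A \<pi>" and \<pi>n: "noncrossing \<pi>" using \<pi> by (auto simp: NC_on_def)
  have fp: "\<And>W. W \<in> \<pi> \<Longrightarrow> partition_on W (f W)" and fn: "\<And>W. W \<in> \<pi> \<Longrightarrow> noncrossing (f W)"
    using f by (auto simp: NC_on_def)
  have "noncrossing (\<Union>W\<in>\<pi>. f W)"
    unfolding noncrossing_def
  proof (intro ballI impI notI)
    fix V U assume "V \<in> (\<Union>W\<in>\<pi>. f W)" "U \<in> (\<Union>W\<in>\<pi>. f W)" "V \<noteq> U"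
      and "\<exists>a b c d. a < b \<and> b < c \<and> c < d \<and> a \<in> V \<and> c \<in> V \<and> b \<in> U \<and> d \<in> U"
    then obtain W1 W2 a b c d where W: "W1 \<in> \<pi>" "V \<in> f W1" "W2 \<in> \<pi>" "U \<in> f W2"
      and abcd: "a < b" "b < c" "c < d" "a \<in> V" "c \<in> V" "b \<in> U" "d \<in> U" by blast
    show False
    proof (cases "W1 = W2")
      case True
      then show False using noncrossingD[OF fn[OF W(1)] W(2) _ \<open>V \<noteq> U\<close> abcd] W(4) by blast
    next
      case False
      have "V \<subseteq> W1" "U \<subseteq> W2" using W partition_on_block_subset fp by blast+
      then show False using noncrossingD[OF \<pi>n W(1,3) False abcd(1-3)] abcd(4-7) by blast
    qed
  qed
  then show ?thesis using partition_on_UN[OF \<pi>p fp] by (simp add: NC_on_def)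
qed

lemma irr_refines_UN:
  assumes "\<And>W. W \<in> \<pi> \<Longrightarrow> f W \<in> irreducible_NC W"
  shows "irr_refines (\<Union>W\<in>\<pi>. f W) \<pi>"
  unfolding irr_refines_def refines_def
proof (intro conjI ballI)
  fix V assume "V \<in> (\<Union>W\<in>\<pi>. f W)"
  then obtain W where "W \<in> \<pi>" "V \<in> f W" by blast
  then have "V \<subseteq> W"
    using assms partition_on_block_subset unfolding irreducible_NC_def NC_on_def by blast
  then show "\<exists>W\<in>\<pi>. V \<subseteq> W" using \<open>W \<in> \<pi>\<close> by blast
next
  fix W assume "W \<in> \<pi>"
  then show "\<exists>U\<in>(\<Union>W\<in>\<pi>. f W). Min W \<in> U \<and> Max W \<in> U"
    using assms unfolding irreducible_NC_def by blast
qed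

definition blocks_inside :: "nat set set \<Rightarrow> nat set \<Rightarrow> nat set set" where
  "blocks_inside \<rho> W = {U \<in> \<rho>. U \<subseteq> W}"

lemma refines_block_inside:
  assumes "partition_on A \<pi>" "refines \<rho> \<pi>" "U \<in> \<rho>" "W \<in> \<pi>" "x \<in> U" "x \<in> W"
  shows "U \<subseteq> W"
proof -
  obtain W' where "W' \<in> \<pi>" "U \<subseteq> W'" using assms(2,3) unfolding refines_def by blast
  then show ?thesis using partition_on_block_unique[OF assms(1) \<open>W' \<in> \<pi>\<close> assms(4)] assms(5,6) by blast
qed

lemma Union_blocks_inside: "refines \<rho> \<pi> \<Longrightarrow> (\<Union>W\<in>\<pi>. blocks_inside \<rho> W) = \<rho>"
  unfolding blocks_inside_def refines_def by blast

lemma blocks_inside_irreducible: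
  assumes A: "finite A" "partition_on A \<pi>" and \<rho>: "\<rho> \<in> NC_on A" and ir: "irr_refines \<rho> \<pi>"
    and W: "W \<in> \<pi>"
  shows "blocks_inside \<rho> W \<in> irreducible_NC W"
proof -
  have "refines \<rho> \<pi>" using ir by (simp add: irr_refines_def)
  have "\<Union> (blocks_inside \<rho> W) = W"
  proof
    show "W \<subseteq> \<Union> (blocks_inside \<rho> W)"
    proof
      fix w assume "w \<in> W"
      then obtain U where "U \<in> \<rho>" "w \<in> U"
        using partition_on_cover partition_on_block_subset[OF A(2) W] \<rho> by (fastforce simp: NC_on_def)
      then show "w \<in> \<Union> (blocks_inside \<rho> W)"
        using refines_block_inside[OF A(2) \<open>refines \<rho> \<pi>\<close> _ W _ \<open>w \<in> W\<close>] by (auto simp: blocks_inside_def)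
    qed
  qed (auto simp: blocks_inside_def)
  then have "blocks_inside \<rho> W \<in> NC_on W"
    using NC_on_subset[OF \<rho>, of "blocks_inside \<rho> W"] by (auto simp: blocks_inside_def)
  moreover obtain U where "U \<in> \<rho>" "Min W \<in> U" "Max W \<in> U" using ir W by (auto simp: irr_refines_def)
  moreover have "U \<subseteq> W"
    using refines_block_inside[OF A(2) \<open>refines \<rho> \<pi>\<close> \<open>U \<in> \<rho>\<close> W \<open>Min W \<in> U\<close>]
      partition_on_block_Min_Max[OF A(1,2) W] by blast
  ultimately show ?thesis by (auto simp: irreducible_NC_def blocks_inside_def)
qed

lemma pieces_disjoint:
  assumes \<pi>: "partition_on A \<pi>" and f: "\<And>W. W \<in> \<pi> \<Longrightarrow> partition_on W (f W)"
    and W: "W \<in> \<pi>" "W' \<in> \<pi>" "W \<noteq> W'"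
  shows "f W \<inter> f W' = {}"
proof -
  have "U \<notin> f W'" if U: "U \<in> f W" for U
  proof
    assume U': "U \<in> f W'"
    obtain u where "u \<in> U" using partition_on_block_nonempty[OF f[OF W(1)] U] by blast
    then have "u \<in> W" "u \<in> W'"
      using partition_on_block_subset[OF f[OF W(1)] U] partition_on_block_subset[OF f[OF W(2)] U'] by blast+
    then show False using partition_on_block_unique[OF \<pi> W(1,2)] W(3) by blast
  qed
  then show ?thesis by blast
qed

lemma blocks_inside_UN:
  assumes \<pi>: "partition_on A \<pi>" and f: "\<And>W. W \<in> \<pi> \<Longrightarrow> partition_on W (f W)" and W: "W \<in> \<pi>"
  shows "blocks_inside (\<Union>W\<in>\<pi>. f W) W = f W"
proof -
  have "W' = W" if "W' \<in> \<pi>" "U \<in> f W'" "U \<subseteq> W" for U W'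
    using partition_on_block_nonempty[OF f] partition_on_block_subset[OF f]
      partition_on_block_unique[OF \<pi> that(1) W] that by blast
  then show ?thesis using W partition_on_block_subset[OF f[OF W]] by (auto simp: blocks_inside_def)
qed

lemma OB_UN_iff:
  assumes A: "finite A" "\<pi> \<in> NC_on A" and f: "\<And>W. W \<in> \<pi> \<Longrightarrow> f W \<in> irreducible_NC W"
    and W: "W \<in> \<pi>" and U: "U \<in> f W"
  shows "U \<in> OB (\<Union>W\<in>\<pi>. f W) \<longleftrightarrow> W \<in> OB \<pi> \<and> U \<in> OB (f W)"
proof -
  have \<pi>p: "partition_on A \<pi>" and \<pi>n: "noncrossing \<pi>" using A(2) by (auto simp: NC_on_def)
  have fp: "\<And>W. W \<in> \<pi> \<Longrightarrow> partition_on W (f W)" using f by (auto simp: irreducible_NC_def NC_on_def)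
  have finW: "\<And>W. W \<in> \<pi> \<Longrightarrow> finite W" using A(1) partition_on_block_subset[OF \<pi>p] finite_subset by blast
  have sub: "\<And>W V. W \<in> \<pi> \<Longrightarrow> V \<in> f W \<Longrightarrow> V \<subseteq> W \<and> V \<noteq> {}"
    using partition_on_block_subset[OF fp] partition_on_block_nonempty[OF fp] by blast
  have hull_mono: "Min W \<le> Min V \<and> Max V \<le> Max W" if "W \<in> \<pi>" "V \<in> f W" for W V
    using sub[OF that] finW[OF that(1)] by (simp add: Min_antimono Max_mono)
  show ?thesis
  proof
    assume outer: "U \<in> OB (\<Union>W\<in>\<pi>. f W)"
    have "W \<in> OB \<pi>"
    proof (rule ccontr)
      assume "W \<notin> OB \<pi>"
      then obtain W' where W': "W' \<in> \<pi>" "nested_in W W'" using W unfolding OB_def by blast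
      then obtain U' where U': "U' \<in> f W'" "Min W' \<in> U'" "Max W' \<in> U'"
        using f by (auto simp: irreducible_NC_def)
      have "W \<noteq> W'" using W'(2) by (auto simp: nested_in_def)
      then have "U' \<noteq> U" using pieces_disjoint[OF \<pi>p fp W W'(1)] U U'(1) by blast
      moreover have "Min U' \<le> Min W'" "Max W' \<le> Max U'"
        using partition_on_block_Min_Max[OF finW[OF W'(1)] fp[OF W'(1)] U'(1)] U' by auto
      ultimately have "nested_in U U'" using W'(2) sub[OF W U] by (auto simp: nested_in_iff)
      then show False using outer U'(1) W'(1) unfolding OB_def by blast
    qed
    moreover have "U \<in> OB (f W)" using outer U W unfolding OB_def by blast
    ultimately show "W \<in> OB \<pi> \<and> U \<in> OB (f W)" ..
  next
    assume outer: "W \<in> OB \<pi> \<and> U \<in> OB (f W)"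
    have "\<not> nested_in U V" if W': "W' \<in> \<pi>" and V: "V \<in> f W'" for W' V
    proof
      assume nested: "nested_in U V"
      show False
      proof (cases "W' = W")
        case True
        then show False using outer nested V unfolding OB_def by blast
      next
        case False
        obtain u where "u \<in> U" using sub[OF W U] by blast
        then have "Min W' \<le> u" "u \<le> Max W'" "u \<in> W"
          using nested hull_mono[OF W' V] sub[OF W U] by (auto simp: nested_in_def)
        then have "nested_in W W'" using noncrossing_nested_inI[OF A(1) \<pi>p \<pi>n W' W False] by blast
        then show False using outer W' unfolding OB_def by blast
      qed
    qed
    then show "U \<in> OB (\<Union>W\<in>\<pi>. f W)" unfolding OB_def using W U by blast
  qed
qed

lemma prod_OB_IB:
  assumes "finite P"
  shows "(\<Prod>U\<in>P. g U) = (\<Prod>U\<in>OB P. g U) * (\<Prod>U\<in>IB P. g U)"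
proof -
  have "finite (OB P)" "finite (IB P)" using finite_subset[OF OB_subset assms] finite_subset[OF IB_subset assms] .
  then show ?thesis using prod.union_disjoint[OF _ _ OB_Int_IB] by (simp add: OB_Un_IB)
qed

lemma nested_boolean_eq_prod:
  assumes "finite P"
  shows "nested_boolean r1 r2 P as = (\<Prod>U\<in>P. if U \<in> OB P then restr r1 U as else restr r2 U as)"
proof -
  have "(\<Prod>U\<in>P. if U \<in> OB P then restr r1 U as else restr r2 U as)
      = (\<Prod>U\<in>OB P. if U \<in> OB P then restr r1 U as else restr r2 U as) *
        (\<Prod>U\<in>IB P. if U \<in> OB P then restr r1 U as else restr r2 U as)"
    by (rule prod_OB_IB[OF assms])
  also have "\<dots> = nested_boolean r1 r2 P as"
    unfolding nested_boolean_def using OB_Int_IB by (intro arg_cong2[where f = "(*)"] prod.cong) auto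
  finally show ?thesis by simp
qed

lemma nested_boolean_same: "finite P \<Longrightarrow> nested_boolean r r P as = (\<Prod>U\<in>P. restr r U as)"
  by (simp add: nested_boolean_eq_prod)

lemma nested_boolean_UN:
  assumes A: "finite A" "\<pi> \<in> NC_on A" and f: "\<And>W. W \<in> \<pi> \<Longrightarrow> f W \<in> irreducible_NC W"
  shows "nested_boolean r1 r2 (\<Union>W\<in>\<pi>. f W) as =
    (\<Prod>W\<in>\<pi>. if W \<in> OB \<pi> then nested_boolean r1 r2 (f W) as else nested_boolean r2 r2 (f W) as)"
proof -
  have \<pi>p: "partition_on A \<pi>" using A(2) by (simp add: NC_on_def)
  have fp: "\<And>W. W \<in> \<pi> \<Longrightarrow> partition_on W (f W)" using f by (auto simp: irreducible_NC_def NC_on_def)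
  have fin\<pi>: "finite \<pi>" using finite_elements[OF A(1) \<pi>p] .
  have finf: "finite (f W)" if "W \<in> \<pi>" for W
    using finite_elements[OF _ fp[OF that]] finite_subset[OF partition_on_block_subset[OF \<pi>p that] A(1)] by blast
  let ?g = "\<lambda>U. if U \<in> OB (\<Union>W\<in>\<pi>. f W) then restr r1 U as else restr r2 U as"
  have "finite (\<Union>W\<in>\<pi>. f W)" using fin\<pi> finf by blast
  then have "nested_boolean r1 r2 (\<Union>W\<in>\<pi>. f W) as = (\<Prod>U\<in>(\<Union>W\<in>\<pi>. f W). ?g U)"
    by (rule nested_boolean_eq_prod)
  also have "\<dots> = (\<Prod>W\<in>\<pi>. \<Prod>U\<in>f W. ?g U)"
    by (rule prod.UNION_disjoint) (use fin\<pi> finf pieces_disjoint[OF \<pi>p fp] in auto)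
  also have "\<dots> = (\<Prod>W\<in>\<pi>. if W \<in> OB \<pi> then nested_boolean r1 r2 (f W) as else nested_boolean r2 r2 (f W) as)"
  proof (rule prod.cong[OF refl])
    fix W assume W: "W \<in> \<pi>"
    have "?g U = (if W \<in> OB \<pi> \<and> U \<in> OB (f W) then restr r1 U as else restr r2 U as)" if "U \<in> f W" for U
      using OB_UN_iff[OF A f W that] by simp
    then show "(\<Prod>U\<in>f W. ?g U) =
        (if W \<in> OB \<pi> then nested_boolean r1 r2 (f W) as else nested_boolean r2 r2 (f W) as)"
      by (simp add: nested_boolean_eq_prod[OF finf[OF W]] cong: prod.cong)
  qed
  finally show ?thesis .
qed

lemma sum_irr_refines_eq_sum_PiE:
  assumes A: "finite A" "\<pi> \<in> NC_on A"
  shows "(\<Sum>\<rho>\<in>{\<rho>\<in>NC_on A. irr_refines \<rho> \<pi>}. nested_boolean r1 r2 \<rho> as) =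
    (\<Sum>f\<in>PiE \<pi> irreducible_NC. \<Prod>W\<in>\<pi>.
      if W \<in> OB \<pi> then nested_boolean r1 r2 (f W) as else nested_boolean r2 r2 (f W) as)"
    (is "_ = (\<Sum>f\<in>_. \<Prod>W\<in>\<pi>. ?h W (f W))")
proof (rule sum.reindex_bij_witness[where j = "\<lambda>\<rho>. restrict (blocks_inside \<rho>) \<pi>"
      and i = "\<lambda>f. \<Union>W\<in>\<pi>. f W"])
  have \<pi>p: "partition_on A \<pi>" using A(2) by (simp add: NC_on_def)
  fix \<rho> assume \<rho>: "\<rho> \<in> {\<rho>\<in>NC_on A. irr_refines \<rho> \<pi>}"
  then have "refines \<rho> \<pi>" by (simp add: irr_refines_def)
  then show "(\<Union>W\<in>\<pi>. restrict (blocks_inside \<rho>) \<pi> W) = \<rho>"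
    using Union_blocks_inside by simp
  show "restrict (blocks_inside \<rho>) \<pi> \<in> PiE \<pi> irreducible_NC"
    using blocks_inside_irreducible[OF A(1) \<pi>p] \<rho> by auto
  have "(\<Prod>W\<in>\<pi>. ?h W (restrict (blocks_inside \<rho>) \<pi> W)) = (\<Prod>W\<in>\<pi>. ?h W (blocks_inside \<rho> W))"
    by (rule prod.cong) auto
  also have "\<dots> = nested_boolean r1 r2 \<rho> as"
    using nested_boolean_UN[OF A, of "blocks_inside \<rho>" r1 r2 as] blocks_inside_irreducible[OF A(1) \<pi>p] \<rho>
      Union_blocks_inside[OF \<open>refines \<rho> \<pi>\<close>] by simp
  finally show "(\<Prod>W\<in>\<pi>. ?h W (restrict (blocks_inside \<rho>) \<pi> W)) = nested_boolean r1 r2 \<rho> as" .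
next
  have \<pi>p: "partition_on A \<pi>" using A(2) by (simp add: NC_on_def)
  fix f assume f: "f \<in> PiE \<pi> irreducible_NC"
  then have fW: "\<And>W. W \<in> \<pi> \<Longrightarrow> f W \<in> irreducible_NC W" by auto
  then have "\<And>W. W \<in> \<pi> \<Longrightarrow> partition_on W (f W)" by (auto simp: irreducible_NC_def NC_on_def)
  then show "restrict (blocks_inside (\<Union>W\<in>\<pi>. f W)) \<pi> = f"
    using blocks_inside_UN[OF \<pi>p] f by (auto simp: fun_eq_iff PiE_def extensional_def)
  show "(\<Union>W\<in>\<pi>. f W) \<in> {\<rho>\<in>NC_on A. irr_refines \<rho> \<pi>}"
    using NC_on_UN[OF A(2)] irr_refines_UN fW by (auto simp: irreducible_NC_def)
qed

lemma sum_irr_refines_factor: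
  assumes A: "finite A" "\<pi> \<in> NC_on A"
  shows "(\<Sum>\<rho>\<in>{\<rho>\<in>NC_on A. irr_refines \<rho> \<pi>}. nested_boolean r1 r2 \<rho> as) =
    (\<Prod>W\<in>OB \<pi>. \<Sum>\<tau>\<in>irreducible_NC W. nested_boolean r1 r2 \<tau> as) *
    (\<Prod>W\<in>IB \<pi>. \<Sum>\<tau>\<in>irreducible_NC W. nested_boolean r2 r2 \<tau> as)"
proof -
  have \<pi>p: "partition_on A \<pi>" using A(2) by (simp add: NC_on_def)
  have fin\<pi>: "finite \<pi>" using finite_elements[OF A(1) \<pi>p] .
  have finW: "\<And>W. W \<in> \<pi> \<Longrightarrow> finite W"
    using A(1) partition_on_block_subset[OF \<pi>p] finite_subset by blast
  let ?h = "\<lambda>W \<tau>. if W \<in> OB \<pi> then nested_boolean r1 r2 \<tau> as else nested_boolean r2 r2 \<tau> as"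
  have "(\<Sum>\<rho>\<in>{\<rho>\<in>NC_on A. irr_refines \<rho> \<pi>}. nested_boolean r1 r2 \<rho> as) =
      (\<Prod>W\<in>\<pi>. \<Sum>\<tau>\<in>irreducible_NC W. ?h W \<tau>)"
    unfolding sum_irr_refines_eq_sum_PiE[OF A]
    by (rule prod_sum_PiE[symmetric]) (use fin\<pi> finW finite_irreducible_NC in auto)
  also have "\<dots> = (\<Prod>W\<in>OB \<pi>. \<Sum>\<tau>\<in>irreducible_NC W. ?h W \<tau>) * (\<Prod>W\<in>IB \<pi>. \<Sum>\<tau>\<in>irreducible_NC W. ?h W \<tau>)"
    by (rule prod_OB_IB[OF fin\<pi>])
  also have "\<dots> = (\<Prod>W\<in>OB \<pi>. \<Sum>\<tau>\<in>irreducible_NC W. nested_boolean r1 r2 \<tau> as) *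
      (\<Prod>W\<in>IB \<pi>. \<Sum>\<tau>\<in>irreducible_NC W. nested_boolean r2 r2 \<tau> as)"
    using OB_Int_IB by (intro arg_cong2[where f = "(*)"] prod.cong refl sum.cong) auto
  finally show ?thesis .
qed

section \<open>Interval partitions and hulls of outer blocks\<close>

definition convex_in :: "nat set \<Rightarrow> nat set \<Rightarrow> bool" where
  "convex_in A V \<longleftrightarrow> (\<forall>x\<in>V. \<forall>z\<in>V. \<forall>y\<in>A. x \<le> y \<longrightarrow> y \<le> z \<longrightarrow> y \<in> V)"

definition interval_partitions :: "nat set \<Rightarrow> nat set set set" where
  "interval_partitions A = {P. partition_on A P \<and> (\<forall>V\<in>P. convex_in A V)}"

lemma convex_inD: "convex_in A V \<Longrightarrow> x \<in> V \<Longrightarrow> z \<in> V \<Longrightarrow> y \<in> A \<Longrightarrow> x \<le> y \<Longrightarrow> y \<le> z \<Longrightarrow> y \<in> V"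
  unfolding convex_in_def by blast

lemma convex_in_hull: "convex_in A (A \<inter> {a..b})"
  by (auto simp: convex_in_def)

lemma Int_part_eq_interval_partitions: "Int_part n = interval_partitions {0..<n}"
proof -
  have iff: "(\<exists>i j. V = {i..j}) \<longleftrightarrow> convex_in {0..<n} V" if P: "partition_on {0..<n} P" and V: "V \<in> P" for P V
  proof
    assume "\<exists>i j. V = {i..j}"
    then obtain i j where "V = {i..j}" by blast
    then show "convex_in {0..<n} V" unfolding convex_in_def by auto
  next
    assume cv: "convex_in {0..<n} V"
    note mm = partition_on_block_Min_Max[OF finite_atLeastLessThan P V]
    have hull: "{Min V..Max V} \<subseteq> {0..<n}" using partition_on_block_subset[OF P V] mm(2) by auto
    have "V = {Min V..Max V}"
    proof
      show "V \<subseteq> {Min V..Max V}" using mm(3,4) by auto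
      show "{Min V..Max V} \<subseteq> V" using convex_inD[OF cv mm(1,2)] hull by auto
    qed
    then show "\<exists>i j. V = {i..j}" by blast
  qed
  show ?thesis unfolding Int_part_def interval_partitions_def
  proof (rule Collect_cong)
    fix P
    show "(partition_on {0..<n} P \<and> (\<forall>V\<in>P. \<exists>i j. V = {i..j})) \<longleftrightarrow>
        (partition_on {0..<n} P \<and> (\<forall>V\<in>P. convex_in {0..<n} V))"
      using iff[of P] by blast
  qed
qed

lemma finite_interval_partitions: "finite A \<Longrightarrow> finite (interval_partitions A)"
  by (rule finite_subset[OF _ finitely_many_partition_on]) (auto simp: interval_partitions_def)

lemma interval_partitions_subset_NC_on: "interval_partitions A \<subseteq> NC_on A"
proof
  fix \<sigma> assume "\<sigma> \<in> interval_partitions A"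
  then have p: "partition_on A \<sigma>" and cv: "\<And>V. V \<in> \<sigma> \<Longrightarrow> convex_in A V"
    by (auto simp: interval_partitions_def)
  have "noncrossing \<sigma>"
    unfolding noncrossing_def
  proof (intro ballI impI notI)
    fix V W assume V: "V \<in> \<sigma>" and W: "W \<in> \<sigma>" and "V \<noteq> W"
      and "\<exists>a b c d. a < b \<and> b < c \<and> c < d \<and> a \<in> V \<and> c \<in> V \<and> b \<in> W \<and> d \<in> W"
    then obtain a b c where abc: "a < b" "b < c" "a \<in> V" "c \<in> V" "b \<in> W" by blast
    then have "b \<in> V"
      using convex_inD[OF cv[OF V] abc(3,4)] partition_on_block_subset[OF p W] by auto
    then show False using partition_on_block_unique[OF p V W _ abc(5)] \<open>V \<noteq> W\<close> by blast
  qed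
  then show "\<sigma> \<in> NC_on A" using p by (simp add: NC_on_def)
qed

lemma IB_interval_partition:
  assumes A: "finite A" and \<sigma>: "\<sigma> \<in> interval_partitions A"
  shows "IB \<sigma> = {}"
proof -
  have p: "partition_on A \<sigma>" and cv: "\<And>V. V \<in> \<sigma> \<Longrightarrow> convex_in A V"
    using \<sigma> by (auto simp: interval_partitions_def)
  have "\<not> nested_in W V" if W: "W \<in> \<sigma>" and V: "V \<in> \<sigma>" for W V
  proof
    assume nested: "nested_in W V"
    obtain w where w: "w \<in> W" using partition_on_block_nonempty[OF p W] by blast
    then have "Min V \<le> w" "w \<le> Max V" "w \<in> A"
      using nested partition_on_block_subset[OF p W] by (auto simp: nested_in_def)
    then have "w \<in> V" using convex_inD[OF cv[OF V] partition_on_block_Min_Max(1,2)[OF A p V]] by blast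
    then show False using partition_on_block_unique[OF p V W _ w] nested by (simp add: nested_in_def)
  qed
  then show ?thesis by (auto simp: IB_def)
qed

lemma OB_interval_partition: "finite A \<Longrightarrow> \<sigma> \<in> interval_partitions A \<Longrightarrow> OB \<sigma> = \<sigma>"
  using IB_interval_partition OB_Un_IB[of \<sigma>] by simp

lemma outer_block_hull_cover:
  assumes A: "finite A" "partition_on A \<rho>" and U: "U \<in> \<rho>"
  shows "\<exists>V\<in>OB \<rho>. U \<subseteq> {Min V..Max V}"
  using U
proof (induction U rule: measure_induct_rule[where f = "\<lambda>U. Max A - (Max U - Min U)"])
  case (less U)
  note mmU = partition_on_block_Min_Max[OF A less.prems]
  show ?case
  proof (cases "U \<in> OB \<rho>")
    case True
    then show ?thesis using mmU(3,4) by (intro bexI[OF _ True]) auto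
  next
    case False
    then obtain V where V: "V \<in> \<rho>" "nested_in U V" using less.prems unfolding OB_def by blast
    note mmV = partition_on_block_Min_Max[OF A V(1)]
    have U_hull: "U \<subseteq> {Min V..Max V}" using V(2) by (simp add: nested_in_iff)
    then have hull: "Min V \<le> Min U" "Max U \<le> Max V" using mmU(1,2) by auto
    have "V \<noteq> U" using V(2) by (simp add: nested_in_def)
    then have "Min V \<noteq> Min U" using partition_on_block_unique[OF A(2) V(1) less.prems mmV(1)] mmU(1) by auto
    moreover have "Max V \<le> Max A" using A(1) partition_on_block_subset[OF A(2) V(1)] mmV(2) by auto
    ultimately have "Max A - (Max V - Min V) < Max A - (Max U - Min U)"
      using hull mmU(3)[OF mmU(2)] by linarith
    then obtain V' where V': "V' \<in> OB \<rho>" "V \<subseteq> {Min V'..Max V'}" using less.IH V(1) by blast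
    then have "{Min V..Max V} \<subseteq> {Min V'..Max V'}" using mmV(1,2) by auto
    then show ?thesis using V'(1) U_hull by blast
  qed
qed

lemma outer_block_hulls_disjoint:
  assumes A: "finite A" "\<rho> \<in> NC_on A" and V: "V \<in> OB \<rho>" "V' \<in> OB \<rho>" "V \<noteq> V'"
  shows "{Min V..Max V} \<inter> {Min V'..Max V'} = {}"
proof -
  have p: "partition_on A \<rho>" and nc: "noncrossing \<rho>" using A(2) by (auto simp: NC_on_def)
  have no_overlap: False
    if X: "X \<in> OB \<rho>" and Y: "Y \<in> OB \<rho>" "X \<noteq> Y" and "Min X \<le> Min Y" "Min Y \<le> Max X" for X Y
  proof -
    have "X \<in> \<rho>" "Y \<in> \<rho>" using X Y OB_subset by blast+
    have "nested_in Y X"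
      by (rule noncrossing_nested_inI[OF A(1) p nc \<open>X \<in> \<rho>\<close> \<open>Y \<in> \<rho>\<close> Y(2)
            partition_on_block_Min_Max(1)[OF A(1) p \<open>Y \<in> \<rho>\<close>]])
        (use that(4,5) in auto)
    then show False using Y(1) \<open>X \<in> \<rho>\<close> unfolding OB_def by blast
  qed
  show ?thesis
  proof (rule ccontr)
    assume "{Min V..Max V} \<inter> {Min V'..Max V'} \<noteq> {}"
    then obtain x where "x \<in> {Min V..Max V}" "x \<in> {Min V'..Max V'}" by blast
    then have x: "Min V \<le> x" "x \<le> Max V" "Min V' \<le> x" "x \<le> Max V'" by auto
    show False
    proof (cases "Min V \<le> Min V'")
      case True
      show False by (rule no_overlap[OF V True]) (use x in linarith)
    next
      case False
      show False by (rule no_overlap[OF V(2,1) V(3)[symmetric]]) (use x False in linarith)+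
    qed
  qed
qed

definition outer_hulls :: "nat set \<Rightarrow> nat set set \<Rightarrow> nat set set" where
  "outer_hulls A \<rho> = (\<lambda>V. A \<inter> {Min V..Max V}) ` OB \<rho>"

lemma Min_Max_Int_atLeastAtMost:
  fixes A :: "'a::linorder set"
  assumes "finite A" "a \<in> A" "b \<in> A" "a \<le> b"
  shows "Min (A \<inter> {a..b}) = a" "Max (A \<inter> {a..b}) = b"
  using assms by (auto intro: Min_eqI Max_eqI)

lemma block_hull_Min_Max:
  assumes A: "finite A" "partition_on A \<rho>" and V: "V \<in> \<rho>"
  shows "Min V \<in> A \<inter> {Min V..Max V}"
    "Min (A \<inter> {Min V..Max V}) = Min V" "Max (A \<inter> {Min V..Max V}) = Max V"
proof -
  note mm = partition_on_block_Min_Max[OF A V]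
  have "Min V \<in> A" "Max V \<in> A" "Min V \<le> Max V"
    using mm(1,2) mm(4)[OF mm(1)] partition_on_block_subset[OF A(2) V] by auto
  then show "Min V \<in> A \<inter> {Min V..Max V}"
    "Min (A \<inter> {Min V..Max V}) = Min V" "Max (A \<inter> {Min V..Max V}) = Max V"
    using Min_Max_Int_atLeastAtMost[OF A(1)] by auto
qed

lemma outer_hulls_interval_partition:
  assumes A: "finite A" "\<rho> \<in> NC_on A"
  shows "outer_hulls A \<rho> \<in> interval_partitions A"
proof -
  have p: "partition_on A \<rho>" using A(2) by (simp add: NC_on_def)
  have "partition_on A (outer_hulls A \<rho>)"
  proof (rule partition_onI)
    show "\<Union> (outer_hulls A \<rho>) = A"
    proof
      show "A \<subseteq> \<Union> (outer_hulls A \<rho>)"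
      proof
        fix a assume "a \<in> A"
        then obtain U where "U \<in> \<rho>" "a \<in> U" using partition_on_cover[OF p] by blast
        then show "a \<in> \<Union> (outer_hulls A \<rho>)"
          using outer_block_hull_cover[OF A(1) p] \<open>a \<in> A\<close> unfolding outer_hulls_def by blast
      qed
    qed (unfold outer_hulls_def, blast)
    show "{} \<notin> outer_hulls A \<rho>"
      using block_hull_Min_Max(1)[OF A(1) p] OB_subset unfolding outer_hulls_def by blast
    fix P Q assume "P \<in> outer_hulls A \<rho>" "Q \<in> outer_hulls A \<rho>" "P \<noteq> Q"
    then obtain V V' where "V \<in> OB \<rho>" "V' \<in> OB \<rho>" "V \<noteq> V'"
      "P = A \<inter> {Min V..Max V}" "Q = A \<inter> {Min V'..Max V'}" unfolding outer_hulls_def by blast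
    then show "disjnt P Q" using outer_block_hulls_disjoint[OF A] unfolding disjnt_def by blast
  qed
  then show ?thesis using convex_in_hull unfolding interval_partitions_def outer_hulls_def by blast
qed

lemma irr_refines_outer_hulls:
  assumes A: "finite A" "partition_on A \<rho>"
  shows "irr_refines \<rho> (outer_hulls A \<rho>)"
  unfolding irr_refines_def refines_def
proof (intro conjI ballI)
  fix U assume U: "U \<in> \<rho>"
  then show "\<exists>W\<in>outer_hulls A \<rho>. U \<subseteq> W"
    using outer_block_hull_cover[OF A U] partition_on_block_subset[OF A(2) U]
    unfolding outer_hulls_def by blast
next
  fix W assume "W \<in> outer_hulls A \<rho>"
  then obtain V where V: "V \<in> \<rho>" and W: "W = A \<inter> {Min V..Max V}"
    using OB_subset unfolding outer_hulls_def by blast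
  then show "\<exists>U\<in>\<rho>. Min W \<in> U \<and> Max W \<in> U"
    using block_hull_Min_Max(2,3)[OF A V] partition_on_block_Min_Max(1,2)[OF A V] by auto
qed

lemma interval_partition_eq_outer_hulls:
  assumes A: "finite A" "\<rho> \<in> NC_on A" and \<sigma>: "\<sigma> \<in> interval_partitions A" and ir: "irr_refines \<rho> \<sigma>"
  shows "\<sigma> = outer_hulls A \<rho>"
proof (rule partition_on_subset_eq)
  have p: "partition_on A \<rho>" using A(2) by (simp add: NC_on_def)
  show ps: "partition_on A \<sigma>" using \<sigma> by (simp add: interval_partitions_def)
  have cv: "\<And>V. V \<in> \<sigma> \<Longrightarrow> convex_in A V" using \<sigma> by (simp add: interval_partitions_def)
  have "refines \<rho> \<sigma>" using ir by (simp add: irr_refines_def)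
  show "partition_on A (outer_hulls A \<rho>)"
    using outer_hulls_interval_partition[OF A] by (simp add: interval_partitions_def)
  show "\<sigma> \<subseteq> outer_hulls A \<rho>"
  proof
    fix W assume W: "W \<in> \<sigma>"
    note mW = partition_on_block_Min_Max[OF A(1) ps W]
    obtain U where U: "U \<in> \<rho>" "Min W \<in> U" "Max W \<in> U" using ir W by (auto simp: irr_refines_def)
    note mU = partition_on_block_Min_Max[OF A(1) p U(1)]
    have UW: "U \<subseteq> W" using refines_block_inside[OF ps \<open>refines \<rho> \<sigma>\<close> U(1) W U(2) mW(1)] .
    have MinMax: "Min U = Min W" "Max U = Max W"
      using mU(3)[OF U(2)] mW(3)[OF subsetD[OF UW mU(1)]] mU(4)[OF U(3)] mW(4)[OF subsetD[OF UW mU(2)]]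
      by simp_all
    have "W = A \<inter> {Min U..Max U}"
      using MinMax mW convex_inD[OF cv[OF W] mW(1,2)] partition_on_block_subset[OF ps W] by auto
    moreover have "U \<in> OB \<rho>"
    proof (rule ccontr)
      assume "U \<notin> OB \<rho>"
      then obtain U' where U': "U' \<in> \<rho>" "nested_in U U'" using U(1) unfolding OB_def by blast
      note mU' = partition_on_block_Min_Max[OF A(1) p U'(1)]
      obtain W' where W': "W' \<in> \<sigma>" "U' \<subseteq> W'" using \<open>refines \<rho> \<sigma>\<close> U'(1) by (auto simp: refines_def)
      have le: "Min U' \<le> Min U" "Min U \<le> Max U'" using U'(2) mU by (auto simp: nested_in_def)
      have "Min U \<in> W'"
        using convex_inD[OF cv[OF W'(1)], of "Min U'" "Max U'" "Min U"] le W'(2) mU' mU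
          partition_on_block_subset[OF p U(1)] by blast
      then have "W' = W" using partition_on_block_unique[OF ps W'(1) W] UW mU by blast
      then have "Min U' = Min U" using W'(2) mU'(1) mW(3) MinMax le by fastforce
      then have "U' = U" using partition_on_block_unique[OF p U'(1) U(1)] mU'(1) mU(1) by simp
      then show False using U'(2) by (simp add: nested_in_def)
    qed
    ultimately show "W \<in> outer_hulls A \<rho>" by (auto simp: outer_hulls_def)
  qed
qed

lemma sum_NC_on_group_interval:
  assumes A: "finite A"
  shows "(\<Sum>\<rho>\<in>NC_on A. g \<rho>) = (\<Sum>\<sigma>\<in>interval_partitions A. \<Sum>\<rho>\<in>{\<rho>\<in>NC_on A. irr_refines \<rho> \<sigma>}. g \<rho>)"
proof -
  have "irr_refines \<rho> (outer_hulls A \<rho>)" if "\<rho> \<in> NC_on A" for \<rho>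
    using irr_refines_outer_hulls[OF A] that by (simp add: NC_on_def)
  then have "{\<rho>\<in>NC_on A. irr_refines \<rho> \<sigma>} = {\<rho>\<in>NC_on A. outer_hulls A \<rho> = \<sigma>}"
    if "\<sigma> \<in> interval_partitions A" for \<sigma>
    using interval_partition_eq_outer_hulls[OF A _ that] by blast
  then have "(\<Sum>\<sigma>\<in>interval_partitions A. \<Sum>\<rho>\<in>{\<rho>\<in>NC_on A. irr_refines \<rho> \<sigma>}. g \<rho>) =
      (\<Sum>\<sigma>\<in>interval_partitions A. \<Sum>\<rho>\<in>{\<rho>\<in>NC_on A. outer_hulls A \<rho> = \<sigma>}. g \<rho>)"
    by (intro sum.cong) simp_all
  also have "\<dots> = (\<Sum>\<rho>\<in>NC_on A. g \<rho>)"
    by (rule sum.group[OF finite_NC_on[OF A] finite_interval_partitions[OF A]])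
      (use outer_hulls_interval_partition[OF A] in blast)
  finally show ?thesis ..
qed

section \<open>Relabelling blocks by ranks\<close>

lemma strict_mono_on_the_inv_into:
  fixes h :: "'a::linorder \<Rightarrow> 'b::linorder"
  assumes h: "strict_mono_on X h"
  shows "strict_mono_on (h ` X) (the_inv_into X h)"
proof (rule strict_mono_onI)
  fix y y' assume "y \<in> h ` X" "y' \<in> h ` X" "y < y'"
  then obtain x x' where "x \<in> X" "x' \<in> X" "y = h x" "y' = h x'" "h x < h x'" by blast
  then show "the_inv_into X h y < the_inv_into X h y'"
    using strict_mono_on_less[OF h] the_inv_into_f_f[OF strict_mono_on_imp_inj_on[OF h]] by simp
qed

lemma strict_mono_on_Min_Max_image:
  fixes h :: "'a::linorder \<Rightarrow> 'b::linorder"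
  assumes h: "strict_mono_on X h" and V: "V \<subseteq> X" "finite V" "V \<noteq> {}"
  shows "Min (h ` V) = h (Min V)" "Max (h ` V) = h (Max V)"
proof -
  have "Min V \<in> V" "Max V \<in> V" using V(2,3) by simp_all
  have "h (Min V) \<le> h v" "h v \<le> h (Max V)" if "v \<in> V" for v
  proof -
    have "v \<in> X" "Min V \<in> X" "Max V \<in> X" using V(1) that \<open>Min V \<in> V\<close> \<open>Max V \<in> V\<close> by blast+
    moreover have "Min V \<le> v" "v \<le> Max V" using V(2) that by simp_all
    ultimately show "h (Min V) \<le> h v" "h v \<le> h (Max V)" using strict_mono_on_leD[OF h] by blast+
  qed
  then show "Min (h ` V) = h (Min V)" "Max (h ` V) = h (Max V)"
    using V(2) \<open>Min V \<in> V\<close> \<open>Max V \<in> V\<close> by (auto intro!: Min_eqI Max_eqI)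
qed

lemma nested_in_image_iff:
  fixes h :: "nat \<Rightarrow> nat"
  assumes h: "strict_mono_on X h"
    and U: "U \<subseteq> X" "finite U" "U \<noteq> {}" and V: "V \<subseteq> X" "finite V" "V \<noteq> {}"
  shows "nested_in (h ` U) (h ` V) \<longleftrightarrow> nested_in U V"
proof -
  have "Min V \<in> X" "Max V \<in> X" using V(1) Min_in[OF V(2,3)] Max_in[OF V(2,3)] by blast+
  have "h u \<in> {h (Min V)..h (Max V)} \<longleftrightarrow> u \<in> {Min V..Max V}" if "u \<in> U" for u
  proof -
    have "u \<in> X" using U(1) that by blast
    then show ?thesis using strict_mono_on_less_eq[OF h \<open>Min V \<in> X\<close> \<open>u \<in> X\<close>]
        strict_mono_on_less_eq[OF h \<open>u \<in> X\<close> \<open>Max V \<in> X\<close>] by simp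
  qed
  then have "h ` U \<subseteq> {h (Min V)..h (Max V)} \<longleftrightarrow> U \<subseteq> {Min V..Max V}"
    unfolding subset_iff by blast
  moreover have "h ` V = h ` U \<longleftrightarrow> V = U"
    using inj_on_image_eq_iff[OF strict_mono_on_imp_inj_on[OF h] V(1) U(1)] .
  ultimately show ?thesis by (simp add: nested_in_iff strict_mono_on_Min_Max_image[OF h V])
qed

lemma OB_image:
  fixes h :: "nat \<Rightarrow> nat"
  assumes h: "strict_mono_on X h" and X: "finite X" and P: "partition_on X P"
  shows "OB ((`) h ` P) = (`) h ` OB P" "IB ((`) h ` P) = (`) h ` IB P"
proof -
  have block: "U \<subseteq> X" "finite U" "U \<noteq> {}" if "U \<in> P" for U
    using partition_on_block_subset[OF P that] partition_on_block_nonempty[OF P that] X finite_subset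
    by blast+
  have iff: "(\<exists>V'\<in>(`) h ` P. nested_in (h ` U) V') \<longleftrightarrow> (\<exists>V\<in>P. nested_in U V)" if "U \<in> P" for U
  proof -
    have "(\<exists>V'\<in>(`) h ` P. nested_in (h ` U) V') \<longleftrightarrow> (\<exists>V\<in>P. nested_in (h ` U) (h ` V))" by blast
    also have "\<dots> \<longleftrightarrow> (\<exists>V\<in>P. nested_in U V)"
      by (intro bex_cong refl nested_in_image_iff[OF h block[OF that]] block)
    finally show ?thesis .
  qed
  show "OB ((`) h ` P) = (`) h ` OB P" "IB ((`) h ` P) = (`) h ` IB P"
    unfolding OB_def IB_def using iff by blast+
qed

lemma image_partition_on:
  assumes "inj_on h X" and "partition_on X P"
  shows "partition_on (h ` X) ((`) h ` P)"
  using partition_on_inj_image[OF assms(2,1)] partition_onD3[OF assms(2)] by (simp add: image_iff)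

lemma NC_on_image:
  fixes h :: "nat \<Rightarrow> nat"
  assumes h: "strict_mono_on X h" and P: "P \<in> NC_on X"
  shows "(`) h ` P \<in> NC_on (h ` X)"
proof -
  have p: "partition_on X P" and nc: "noncrossing P" using P by (auto simp: NC_on_def)
  have "noncrossing ((`) h ` P)"
    unfolding noncrossing_def
  proof (intro ballI impI notI)
    fix V' W' assume "V' \<in> (`) h ` P" "W' \<in> (`) h ` P" "V' \<noteq> W'"
      and "\<exists>a b c d. a < b \<and> b < c \<and> c < d \<and> a \<in> V' \<and> c \<in> V' \<and> b \<in> W' \<and> d \<in> W'"
    then obtain V W a b c d where VW: "V \<in> P" "W \<in> P" "V \<noteq> W" and abcd: "a \<in> V" "c \<in> V" "b \<in> W" "d \<in> W"
      and "h a < h b" "h b < h c" "h c < h d" by blast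
    moreover have "a \<in> X" "b \<in> X" "c \<in> X" "d \<in> X"
      using abcd partition_on_block_subset[OF p] VW by blast+
    ultimately show False using noncrossingD[OF nc VW, of a b c d] strict_mono_on_less[OF h] by simp
  qed
  then show ?thesis
    using image_partition_on[OF strict_mono_on_imp_inj_on[OF h] p] by (simp add: NC_on_def)
qed

lemma interval_partitions_image:
  fixes h :: "nat \<Rightarrow> nat"
  assumes h: "strict_mono_on X h" and P: "P \<in> interval_partitions X"
  shows "(`) h ` P \<in> interval_partitions (h ` X)"
proof -
  have p: "partition_on X P" and cv: "\<And>V. V \<in> P \<Longrightarrow> convex_in X V"
    using P by (auto simp: interval_partitions_def)
  have "convex_in (h ` X) (h ` V)" if V: "V \<in> P" for V
    unfolding convex_in_def
  proof (intro ballI impI)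
    fix x z y assume "x \<in> h ` V" "z \<in> h ` V" "y \<in> h ` X" "x \<le> y" "y \<le> z"
    then obtain a b c where abc: "a \<in> V" "c \<in> V" "b \<in> X" "x = h a" "z = h c" "y = h b"
      and "h a \<le> h b" "h b \<le> h c" by blast
    moreover have "a \<in> X" "c \<in> X" using abc partition_on_block_subset[OF p V] by blast+
    ultimately have "b \<in> V" using convex_inD[OF cv[OF V] abc(1-3)] strict_mono_on_less_eq[OF h] by simp
    then show "y \<in> h ` V" using abc by blast
  qed
  then show ?thesis
    using image_partition_on[OF strict_mono_on_imp_inj_on[OF h] p] by (auto simp: interval_partitions_def)
qed

lemma relabel_image_eq:
  fixes h :: "nat \<Rightarrow> nat" and C :: "nat set \<Rightarrow> nat set set set"
  assumes h: "strict_mono_on X h"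
    and C_image: "\<And>X h P. strict_mono_on X h \<Longrightarrow> P \<in> C X \<Longrightarrow> (`) h ` P \<in> C (h ` X)"
    and C_Pow: "\<And>X P. P \<in> C X \<Longrightarrow> P \<subseteq> Pow X"
  shows "(`) ((`) h) ` C X = C (h ` X)"
proof
  show "(`) ((`) h) ` C X \<subseteq> C (h ` X)" using C_image[OF h] by blast
  show "C (h ` X) \<subseteq> (`) ((`) h) ` C X"
  proof
    fix Q assume Q: "Q \<in> C (h ` X)"
    let ?g = "the_inv_into X h"
    have inj: "inj_on h X" using strict_mono_on_imp_inj_on[OF h] .
    have "(`) ?g ` Q \<in> C X"
      using C_image[OF strict_mono_on_the_inv_into[OF h] Q] the_inv_into_onto[OF inj] by simp
    moreover have "(`) h ` (`) ?g ` Q = Q"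
    proof -
      have "h ` ?g ` V = V" if "V \<in> Q" for V
        using C_Pow[OF Q] that f_the_inv_into_f[OF inj] by (force simp: image_image)
      then show ?thesis by (simp add: image_image)
    qed
    ultimately show "Q \<in> (`) ((`) h) ` C X" by (metis image_eqI)
  qed
qed

definition rank_in :: "nat set \<Rightarrow> nat \<Rightarrow> nat" where
  "rank_in W i = card {j\<in>W. j < i}"

lemma strict_mono_on_rank_in: "finite W \<Longrightarrow> strict_mono_on W (rank_in W)"
  unfolding rank_in_def by (rule strict_mono_onI) (auto intro!: psubset_card_mono)

lemma rank_in_image: assumes W: "finite W" shows "rank_in W ` W = {0..<card W}"
proof (rule card_subset_eq)
  show "rank_in W ` W \<subseteq> {0..<card W}"
    using W by (auto simp: rank_in_def intro!: psubset_card_mono)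
  show "card (rank_in W ` W) = card {0..<card W}"
    using card_image[OF strict_mono_on_imp_inj_on[OF strict_mono_on_rank_in[OF W]]] by simp
qed simp

lemma nths_nths_rank_in:
  assumes W: "finite W" and V: "V \<subseteq> W"
  shows "nths (nths as W) (rank_in W ` V) = nths as V"
proof -
  have "{i \<in> W. \<exists>j \<in> rank_in W ` V. card {i' \<in> W. i' < i} = j} = V"
    using inj_on_image_mem_iff[OF strict_mono_on_imp_inj_on[OF strict_mono_on_rank_in[OF W]] _ V] V
    unfolding rank_in_def by blast
  then show ?thesis by (simp add: nths_nths)
qed

lemma nested_boolean_rank_in:
  assumes W: "finite W" and P: "partition_on W P"
  shows "nested_boolean r1 r2 ((`) (rank_in W) ` P) (nths as W) = nested_boolean r1 r2 P as"
proof -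
  let ?h = "rank_in W"
  have h: "strict_mono_on W ?h" using strict_mono_on_rank_in[OF W] .
  have inj: "inj_on ((`) ?h) P"
    using inj_on_image_Pow[OF strict_mono_on_imp_inj_on[OF h]] partition_on_Pow[OF P] inj_on_subset by blast
  have restr: "restr r (?h ` V) (nths as W) = restr r V as" if "V \<in> P" for r V
    by (simp only: restr_def nths_nths_rank_in[OF W partition_on_block_subset[OF P that]])
  have "(\<Prod>V\<in>(`) ?h ` B. restr r V (nths as W)) = (\<Prod>V\<in>B. restr r V as)" if "B \<subseteq> P" for r B
  proof -
    have "(\<Prod>V\<in>(`) ?h ` B. restr r V (nths as W)) = (\<Prod>V\<in>B. restr r (?h ` V) (nths as W))"
      using prod.reindex[OF inj_on_subset[OF inj that]] by (simp add: comp_def)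
    also have "\<dots> = (\<Prod>V\<in>B. restr r V as)" using restr that by (intro prod.cong) auto
    finally show ?thesis .
  qed
  with OB_subset IB_subset show ?thesis unfolding nested_boolean_def OB_image[OF h W P] by simp
qed

lemma sum_nested_boolean_rank_in:
  assumes W: "finite W"
    and C_image: "\<And>X h P. strict_mono_on X h \<Longrightarrow> P \<in> C X \<Longrightarrow> (`) h ` P \<in> C (h ` X)"
    and C_part: "\<And>X P. P \<in> C X \<Longrightarrow> partition_on X P"
  shows "(\<Sum>\<sigma>\<in>C {0..<card W}. nested_boolean r1 r2 \<sigma> (nths as W)) = (\<Sum>\<sigma>\<in>C W. nested_boolean r1 r2 \<sigma> as)"
proof -
  let ?h = "rank_in W"
  have h: "strict_mono_on W ?h" using strict_mono_on_rank_in[OF W] .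
  have C_Pow: "\<And>X P. P \<in> C X \<Longrightarrow> P \<subseteq> Pow X" using C_part partition_on_Pow by blast
  have "C {0..<card W} = (`) ((`) ?h) ` C W"
    using relabel_image_eq[OF h C_image C_Pow] rank_in_image[OF W] by simp
  moreover have "inj_on ((`) ((`) ?h)) (C W)"
    by (rule inj_on_subset[OF inj_on_image_Pow[OF inj_on_image_Pow[OF strict_mono_on_imp_inj_on[OF h]]]])
      (use C_Pow in blast)
  ultimately have "(\<Sum>\<sigma>\<in>C {0..<card W}. nested_boolean r1 r2 \<sigma> (nths as W)) =
      (\<Sum>\<sigma>\<in>C W. nested_boolean r1 r2 ((`) ?h ` \<sigma>) (nths as W))"
    by (simp add: sum.reindex)
  also have "\<dots> = (\<Sum>\<sigma>\<in>C W. nested_boolean r1 r2 \<sigma> as)"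
    by (intro sum.cong refl nested_boolean_rank_in[OF W] C_part)
  finally show ?thesis .
qed

section \<open>Cumulants on blocks\<close>

lemma is_free_imp_is_cfree_cumulants:
  assumes "is_free_cumulants \<psi> r"
  shows "is_cfree_cumulants \<psi> r r"
  unfolding is_cfree_cumulants_def
proof (intro allI impI)
  fix bs :: "'a list" assume "bs \<noteq> []"
  then have "\<psi> (prod_list bs) = (\<Sum>\<sigma>\<in>NC (length bs). \<Prod>V\<in>\<sigma>. restr r V bs)"
    using assms unfolding is_free_cumulants_def by blast
  also have "\<dots> = (\<Sum>\<sigma>\<in>NC (length bs). (\<Prod>V\<in>OB \<sigma>. restr r V bs) * (\<Prod>W\<in>IB \<sigma>. restr r W bs))"
  proof (rule sum.cong[OF refl], rule prod_OB_IB)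
    fix \<sigma> assume "\<sigma> \<in> NC (length bs)"
    then show "finite \<sigma>" using finite_elements[of "{0..<length bs}" \<sigma>] by (simp add: NC_def)
  qed
  finally show "\<psi> (prod_list bs) =
      (\<Sum>\<sigma>\<in>NC (length bs). (\<Prod>V\<in>OB \<sigma>. restr r V bs) * (\<Prod>W\<in>IB \<sigma>. restr r W bs))" .
qed

lemma length_nths_subset: "W \<subseteq> {0..<length as} \<Longrightarrow> length (nths as W) = card W"
  unfolding length_nths by (rule arg_cong[where f = card]) auto

lemma cfree_moment_nths:
  assumes hC: "is_cfree_cumulants \<theta> r2 r1" and W: "W \<subseteq> {0..<length as}" "W \<noteq> {}"
  shows "\<theta> (prod_list (nths as W)) = (\<Sum>\<sigma>\<in>NC_on W. nested_boolean r1 r2 \<sigma> as)"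
proof -
  have fin: "finite W" using W(1) finite_subset by blast
  have len: "length (nths as W) = card W" using length_nths_subset[OF W(1)] .
  then have "nths as W \<noteq> []" using fin W(2) by auto
  then have "\<theta> (prod_list (nths as W)) = (\<Sum>\<sigma>\<in>NC_on {0..<card W}. nested_boolean r1 r2 \<sigma> (nths as W))"
    using hC len by (simp add: is_cfree_cumulants_def nested_boolean_def NC_eq_NC_on)
  also have "\<dots> = (\<Sum>\<sigma>\<in>NC_on W. nested_boolean r1 r2 \<sigma> as)"
    by (rule sum_nested_boolean_rank_in[OF fin NC_on_image]) (simp_all add: NC_on_def)
  finally show ?thesis .
qed

lemma boolean_moment_nths:
  assumes hB: "is_boolean_cumulants \<theta> \<beta>" and W: "W \<subseteq> {0..<length as}" "W \<noteq> {}"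
  shows "\<theta> (prod_list (nths as W)) = (\<Sum>\<sigma>\<in>interval_partitions W. \<Prod>V\<in>\<sigma>. restr \<beta> V as)"
proof -
  have fin: "finite W" using W(1) finite_subset by blast
  have len: "length (nths as W) = card W" using length_nths_subset[OF W(1)] .
  have fin_part: "finite \<sigma>" if "\<sigma> \<in> interval_partitions X" "finite X" for \<sigma> X
    using finite_elements that by (auto simp: interval_partitions_def)
  have "nths as W \<noteq> []" using len fin W(2) by auto
  then have "\<theta> (prod_list (nths as W)) =
      (\<Sum>\<sigma>\<in>interval_partitions {0..<card W}. \<Prod>V\<in>\<sigma>. restr \<beta> V (nths as W))"
    using hB len by (simp add: is_boolean_cumulants_def Int_part_eq_interval_partitions)
  also have "\<dots> = (\<Sum>\<sigma>\<in>interval_partitions {0..<card W}. nested_boolean \<beta> \<beta> \<sigma> (nths as W))"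
    using fin_part by (simp add: nested_boolean_same)
  also have "\<dots> = (\<Sum>\<sigma>\<in>interval_partitions W. nested_boolean \<beta> \<beta> \<sigma> as)"
    by (rule sum_nested_boolean_rank_in[OF fin interval_partitions_image])
      (simp_all add: interval_partitions_def)
  also have "\<dots> = (\<Sum>\<sigma>\<in>interval_partitions W. \<Prod>V\<in>\<sigma>. restr \<beta> V as)"
    using fin_part fin by (simp add: nested_boolean_same)
  finally show ?thesis .
qed

lemma cfree_moment_nths_interval:
  assumes hC: "is_cfree_cumulants \<theta> r2 r1" and W: "W \<subseteq> {0..<length as}" "W \<noteq> {}"
  shows "\<theta> (prod_list (nths as W)) =
    (\<Sum>\<sigma>\<in>interval_partitions W. \<Prod>V\<in>\<sigma>. \<Sum>\<tau>\<in>irreducible_NC V. nested_boolean r1 r2 \<tau> as)"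
proof -
  have fin: "finite W" using W(1) finite_subset by blast
  have "\<theta> (prod_list (nths as W)) =
      (\<Sum>\<sigma>\<in>interval_partitions W. \<Sum>\<rho>\<in>{\<rho>\<in>NC_on W. irr_refines \<rho> \<sigma>}. nested_boolean r1 r2 \<rho> as)"
    using cfree_moment_nths[OF assms] sum_NC_on_group_interval[OF fin] by simp
  also have "\<dots> = (\<Sum>\<sigma>\<in>interval_partitions W. \<Prod>V\<in>\<sigma>. \<Sum>\<tau>\<in>irreducible_NC V. nested_boolean r1 r2 \<tau> as)"
  proof (rule sum.cong[OF refl])
    fix \<sigma> assume \<sigma>: "\<sigma> \<in> interval_partitions W"
    have "\<sigma> \<in> NC_on W" using \<sigma> interval_partitions_subset_NC_on by blast
    then show "(\<Sum>\<rho>\<in>{\<rho>\<in>NC_on W. irr_refines \<rho> \<sigma>}. nested_boolean r1 r2 \<rho> as) =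
        (\<Prod>V\<in>\<sigma>. \<Sum>\<tau>\<in>irreducible_NC V. nested_boolean r1 r2 \<tau> as)"
      using sum_irr_refines_factor[OF fin \<open>\<sigma> \<in> NC_on W\<close>, of r1 r2 as]
        OB_interval_partition[OF fin \<sigma>] IB_interval_partition[OF fin \<sigma>] by simp
  qed
  finally show ?thesis .
qed

text \<open>The Boolean and the regrouped c-free moment-cumulant formulas for a block W agree term by term
  on every interval partition other than {W}, by induction; hence they agree on {W} as well.\<close>

lemma boolean_cumulant_eq_sum_irreducible:
  assumes hB: "is_boolean_cumulants \<theta> \<beta>" and hC: "is_cfree_cumulants \<theta> r2 r1"
  shows "W \<subseteq> {0..<length as} \<Longrightarrow> W \<noteq> {} \<Longrightarrow>
    restr \<beta> W as = (\<Sum>\<tau>\<in>irreducible_NC W. nested_boolean r1 r2 \<tau> as)"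
proof (induction W rule: measure_induct_rule[where f = card])
  case (less W)
  have fin: "finite W" using less.prems(1) finite_subset by blast
  let ?S = "\<lambda>V. \<Sum>\<tau>\<in>irreducible_NC V. nested_boolean r1 r2 \<tau> as"
  have single: "{W} \<in> interval_partitions W"
    using less.prems(2) by (simp add: interval_partitions_def partition_on_space convex_in_def)
  have finI: "finite (interval_partitions W)" using finite_interval_partitions[OF fin] .
  have "(\<Sum>\<sigma>\<in>interval_partitions W - {{W}}. \<Prod>V\<in>\<sigma>. restr \<beta> V as) =
      (\<Sum>\<sigma>\<in>interval_partitions W - {{W}}. \<Prod>V\<in>\<sigma>. ?S V)"
  proof (intro sum.cong refl prod.cong)
    fix \<sigma> V assume \<sigma>: "\<sigma> \<in> interval_partitions W - {{W}}" and V: "V \<in> \<sigma>"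
    have p: "partition_on W \<sigma>" using \<sigma> by (simp add: interval_partitions_def)
    have "V \<noteq> W" using partition_on_ground_block[OF p] V \<sigma> by blast
    then have "card V < card W"
      using partition_on_block_subset[OF p V] fin by (simp add: psubset_card_mono)
    then show "restr \<beta> V as = ?S V"
      using less.IH partition_on_block_subset[OF p V] partition_on_block_nonempty[OF p V] less.prems(1)
      by blast
  qed
  moreover have "(\<Sum>\<sigma>\<in>interval_partitions W. \<Prod>V\<in>\<sigma>. restr \<beta> V as) =
      (\<Sum>\<sigma>\<in>interval_partitions W. \<Prod>V\<in>\<sigma>. ?S V)"
    using boolean_moment_nths[OF hB less.prems] cfree_moment_nths_interval[OF hC less.prems] by simp
  ultimately have "(\<Prod>V\<in>{W}. restr \<beta> V as) = (\<Prod>V\<in>{W}. ?S V)"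
    by (simp only: sum.remove[OF finI single] add_right_cancel)
  then show ?case by simp
qed

theorem proposition3p5:
  fixes smul :: "complex \<Rightarrow> 'a::ring_1 \<Rightarrow> 'a" and star :: "'a \<Rightarrow> 'a"
    and \<phi> \<psi> :: "'a \<Rightarrow> complex"
    and \<beta>\<phi> \<beta>\<psi> r\<psi> r\<phi>\<psi> :: "'a list \<Rightarrow> complex"
    and n :: nat and \<pi> :: "nat set set" and as :: "'a list"
  assumes "two_state_ncps smul star \<phi> \<psi>"
    and "is_boolean_cumulants \<phi> \<beta>\<phi>"
    and "is_boolean_cumulants \<psi> \<beta>\<psi>"
    and "is_free_cumulants \<psi> r\<psi>"
    and "is_cfree_cumulants \<phi> r\<psi> r\<phi>\<psi>"
    and "\<pi> \<in> NC n"
    and "length as = n"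
  shows "nested_boolean \<beta>\<phi> \<beta>\<psi> \<pi> as =
    (\<Sum>\<rho>\<in>{\<rho>\<in>NC n. irr_refines \<rho> \<pi>}.
       (\<Prod>V\<in>OB \<rho>. restr r\<phi>\<psi> V as) * (\<Prod>W\<in>IB \<rho>. restr r\<psi> W as))"
proof -
  have \<pi>: "\<pi> \<in> NC_on {0..<n}" using assms(6) by (simp add: NC_eq_NC_on)
  have p: "partition_on {0..<length as} \<pi>" using \<pi> assms(7) by (simp add: NC_on_def)
  have blocks: "V \<subseteq> {0..<length as}" "V \<noteq> {}" if "V \<in> \<pi>" for V
    using partition_on_block_subset[OF p that] partition_on_block_nonempty[OF p that] .
  have outer: "restr \<beta>\<phi> W as = (\<Sum>\<tau>\<in>irreducible_NC W. nested_boolean r\<phi>\<psi> r\<psi> \<tau> as)"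
    if "W \<in> OB \<pi>" for W
    using boolean_cumulant_eq_sum_irreducible[OF assms(2,5) blocks[OF subsetD[OF OB_subset that]]] .
  have inner: "restr \<beta>\<psi> W as = (\<Sum>\<tau>\<in>irreducible_NC W. nested_boolean r\<psi> r\<psi> \<tau> as)"
    if "W \<in> IB \<pi>" for W
    using boolean_cumulant_eq_sum_irreducible[OF assms(3) is_free_imp_is_cfree_cumulants[OF assms(4)]
        blocks[OF subsetD[OF IB_subset that]]] .
  have "nested_boolean \<beta>\<phi> \<beta>\<psi> \<pi> as =
      (\<Prod>W\<in>OB \<pi>. \<Sum>\<tau>\<in>irreducible_NC W. nested_boolean r\<phi>\<psi> r\<psi> \<tau> as) *
      (\<Prod>W\<in>IB \<pi>. \<Sum>\<tau>\<in>irreducible_NC W. nested_boolean r\<psi> r\<psi> \<tau> as)"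
    unfolding nested_boolean_def[of \<beta>\<phi> \<beta>\<psi> \<pi> as] using outer inner by simp
  also have "\<dots> = (\<Sum>\<rho>\<in>{\<rho>\<in>NC_on {0..<n}. irr_refines \<rho> \<pi>}. nested_boolean r\<phi>\<psi> r\<psi> \<rho> as)"
    by (rule sum_irr_refines_factor[OF finite_atLeastLessThan \<pi>, symmetric])
  finally show ?thesis by (simp add: NC_eq_NC_on nested_boolean_def)
qed

end
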